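(* For all integers $k\ge 3$ and $n\ge 2$, the snake graph $S_{k,n}$ is odd prime.
   Context: All graphs are finite and simple. A graph $G$ of order $N$ is odd prime if there is a bijection $\ell:V(G)\to\{1,3,\ldots,2N-1\}$ with $\gcd(\ell(u),\ell(v))=1$ for every edge $uv$. The snake graph $S_{k,n}$ consists of a path $v_1,v_2,\ldots,v_n$ together with, for each $i=1,\ldots,n-1$, new vertices $w_{i,1},\ldots,w_{i,k-2}$ and the path $v_i,w_{i,1},w_{i,2},\ldots,w_{i,k-2},v_{i+1}$; thus each edge $v_iv_{i+1}$ lies on a $k$-cycle, and $S_{k,n}$ has $(k-1)(n-1)+1$ vertices. *)

theory Defs
  imports Main
begin

definition odd_prime_graph :: "'a set \<Rightarrow> 'a set set \<Rightarrow> bool" where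
  "odd_prime_graph V E \<longleftrightarrow>
     (\<exists>l. bij_betw l V {m :: nat. odd m \<and> m < 2 * card V} \<and>
          (\<forall>u v. {u, v} \<in> E \<longrightarrow> gcd (l u) (l v) = 1))"

text \<open>Snake graph S_{k,n}: vertex v_i is encoded as (i,0) for 1 \<le> i \<le> n,
vertex w_{i,j} as (i,j) for 1 \<le> i \<le> n-1 and 1 \<le> j \<le> k-2.\<close>

definition snake_vertices :: "nat \<Rightarrow> nat \<Rightarrow> (nat \<times> nat) set" where
  "snake_vertices k n =
     {(i, 0) | i. 1 \<le> i \<and> i \<le> n} \<union>
     {(i, j) | i j. 1 \<le> i \<and> i \<le> n - 1 \<and> 1 \<le> j \<and> j \<le> k - 2}"

definition snake_edges :: "nat \<Rightarrow> nat \<Rightarrow> (nat \<times> nat) set set" where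
  "snake_edges k n =
     {{(i, 0), (i + 1, 0)} | i. 1 \<le> i \<and> i \<le> n - 1} \<union>
     {{(i, 0), (i, 1)} | i. 1 \<le> i \<and> i \<le> n - 1} \<union>
     {{(i, j), (i, j + 1)} | i j. 1 \<le> i \<and> i \<le> n - 1 \<and> 1 \<le> j \<and> j + 1 \<le> k - 2} \<union>
     {{(i, k - 2), (i + 1, 0)} | i. 1 \<le> i \<and> i \<le> n - 1}"

end

theory Submission
  imports Defs
begin

text \<open>Number the vertices of S_{k,n} along the snake: v_i gets position (i-1)(k-1) and the
  k-2 inner vertices of the i-th cycle follow it, so the positions are exactly 0, ..., (k-1)(n-1);
  the vertex at position p is labelled 2p+1. Every edge then joins positions c d and
  (c+1) d, with d = 1 along the cycles and d = k-1 along the spine v_1 ... v_n, and the labels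
  2cd+1 and 2(c+1)d+1 are coprime because their difference 2d is coprime to 2cd+1.\<close>

lemma coprime_consecutive_multiples_add_1:
  fixes m c :: nat
  shows "coprime (m * c + 1) (m * (c + 1) + 1)"
proof -
  have "gcd (m * c + 1) (m * (c + 1) + 1) = gcd (m * c + 1) m"
    using gcd_add2 [of "m * c + 1" m] by (simp add: algebra_simps)
  also have "\<dots> = gcd m 1"
    using gcd_add_mult [of m c 1] by (simp add: gcd.commute mult.commute)
  finally show ?thesis
    by (simp add: coprime_iff_gcd_eq_1)
qed

lemma bij_betw_odd_lessThan:
  "bij_betw (\<lambda>p. 2 * p + 1) {..<N} {m :: nat. odd m \<and> m < 2 * N}"
proof (rule bij_betw_imageI)
  show "inj_on (\<lambda>p. 2 * p + 1) {..<N}"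
    by (rule inj_onI) simp
  show "(\<lambda>p. 2 * p + 1) ` {..<N} = {m. odd m \<and> m < 2 * N}"
    by (auto elim!: oddE)
qed

lemma odd_prime_graphI:
  assumes "bij_betw f V {..<card V}"
    and "\<And>u v. {u, v} \<in> E \<Longrightarrow> coprime (2 * f u + 1) (2 * f v + 1)"
  shows "odd_prime_graph V E"
  unfolding odd_prime_graph_def
proof (intro exI conjI allI impI)
  show "bij_betw (\<lambda>x. 2 * f x + 1) V {m. odd m \<and> m < 2 * card V}"
    using bij_betw_trans [OF assms(1) bij_betw_odd_lessThan] by (simp add: comp_def)
  show "gcd (2 * f u + 1) (2 * f v + 1) = 1" if "{u, v} \<in> E" for u v
    using assms(2) [OF that] by (simp add: coprime_iff_gcd_eq_1)
qed

fun snake_position :: "nat \<Rightarrow> nat \<times> nat \<Rightarrow> nat" where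
  "snake_position k (i, j) = (i - 1) * (k - 1) + j"

lemma snake_vertices_iff:
  "(i, j) \<in> snake_vertices k n \<longleftrightarrow>
     1 \<le> i \<and> (j = 0 \<and> i \<le> n \<or> i \<le> n - 1 \<and> 1 \<le> j \<and> j \<le> k - 2)"
  by (auto simp: snake_vertices_def)

lemma bij_betw_snake_position:
  assumes "k \<ge> 2" and "n \<ge> 1"
  shows "bij_betw (snake_position k) (snake_vertices k n) {..<(k - 1) * (n - 1) + 1}"
proof -
  define K where "K = k - 1"
  have "K \<ge> 1"
    using assms(1) by (simp add: K_def)
  have pos: "snake_position k (i, j) = (i - 1) * K + j" for i j
    by (simp add: K_def)
  let ?unpos = "\<lambda>p. (p div K + 1, p mod K)"
  show ?thesis
  proof (rule bij_betw_byWitness [where f' = ?unpos])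
    show "\<forall>x \<in> snake_vertices k n. ?unpos (snake_position k x) = x"
      using \<open>K \<ge> 1\<close> by (auto simp: snake_vertices_iff K_def)
    show "\<forall>p \<in> {..<(k - 1) * (n - 1) + 1}. snake_position k (?unpos p) = p"
      by (simp only: pos) simp
    show "snake_position k ` snake_vertices k n \<subseteq> {..<(k - 1) * (n - 1) + 1}"
    proof clarify
      fix i j
      assume "(i, j) \<in> snake_vertices k n"
      then consider "1 \<le> i" "j = 0" "i \<le> n" | "1 \<le> i" "i + 1 \<le> n" "j < K"
        using assms by (auto simp: snake_vertices_iff K_def)
      then have "(i - 1) * K + j \<le> (n - 1) * K"
      proof cases
        case 1
        then show ?thesis
          by (simp add: diff_le_mono)
      next
        case 2
        then have "(i - 1) * K + j < i * K"
          by (cases i) auto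
        also have "\<dots> \<le> (n - 1) * K"
          using 2 by simp
        finally show ?thesis
          by simp
      qed
      then show "snake_position k (i, j) < (k - 1) * (n - 1) + 1"
        by (simp add: pos K_def mult.commute)
    qed
    show "?unpos ` {..<(k - 1) * (n - 1) + 1} \<subseteq> snake_vertices k n"
    proof clarify
      fix p
      assume "p < (k - 1) * (n - 1) + 1"
      then have p: "p \<le> (n - 1) * K"
        by (simp add: K_def mult.commute)
      then have "p div K \<le> n - 1"
        by (metis \<open>K \<ge> 1\<close> div_le_mono nonzero_mult_div_cancel_right not_one_le_zero)
      moreover have "p div K < n - 1" if "p mod K \<noteq> 0"
      proof -
        have "p \<noteq> (n - 1) * K"
          using that by auto
        then have "p < (n - 1) * K"
          using p by simp
        then show ?thesis
          by (simp add: less_mult_imp_div_less)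
      qed
      moreover have "p mod K \<le> k - 2"
        using mod_less_divisor [of K p] \<open>K \<ge> 1\<close> unfolding K_def by linarith
      ultimately show "?unpos p \<in> snake_vertices k n"
        using assms(2) by (force simp: snake_vertices_iff)
    qed
  qed
qed

lemma snake_edge_positions:
  assumes "k \<ge> 2" and "{u, v} \<in> snake_edges k n"
  shows "\<exists>c d. {snake_position k u, snake_position k v} = {c * d, (c + 1) * d}"
proof -
  let ?pos = "snake_position k"
  have "\<exists>x y. {u, v} = {x, y} \<and> (\<exists>c d. ?pos x = c * d \<and> ?pos y = (c + 1) * d)"
    using assms(2) unfolding snake_edges_def
  proof (elim UnE CollectE exE conjE)
    fix i
    assume "{u, v} = {(i, 0), (i + 1, 0)}" "1 \<le> i"
    moreover have "?pos (i + 1, 0) = (i - 1 + 1) * (k - 1)"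
      using \<open>1 \<le> i\<close> by simp
    ultimately show ?thesis
      by (metis snake_position.simps add_0_right)
  next
    fix i
    assume "{u, v} = {(i, 0), (i, 1)}"
    moreover have "?pos (i, 1) = ?pos (i, 0) + 1"
      by simp
    ultimately show ?thesis
      by (metis mult.right_neutral)
  next
    fix i j
    assume "{u, v} = {(i, j), (i, j + 1)}"
    moreover have "?pos (i, j + 1) = ?pos (i, j) + 1"
      by simp
    ultimately show ?thesis
      by (metis mult.right_neutral)
  next
    fix i
    assume "{u, v} = {(i, k - 2), (i + 1, 0)}" "1 \<le> i"
    moreover obtain m where "k = m + 2"
      using \<open>k \<ge> 2\<close> by (metis add.commute le_add_diff_inverse)
    then have "?pos (i + 1, 0) = ?pos (i, k - 2) + 1"
      using \<open>1 \<le> i\<close> by (cases i) (simp_all add: algebra_simps)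
    ultimately show ?thesis
      by (metis mult.right_neutral)
  qed
  then show ?thesis
    by (metis image_insert image_empty)
qed

theorem theorem3p2:
  fixes k n :: nat
  assumes "k \<ge> 3" and "n \<ge> 2"
  shows "odd_prime_graph (snake_vertices k n) (snake_edges k n)"
proof (rule odd_prime_graphI)
  have "bij_betw (snake_position k) (snake_vertices k n) {..<(k - 1) * (n - 1) + 1}"
    using assms by (intro bij_betw_snake_position) simp_all
  moreover from this have "card (snake_vertices k n) = (k - 1) * (n - 1) + 1"
    by (simp add: bij_betw_same_card)
  ultimately show "bij_betw (snake_position k) (snake_vertices k n) {..<card (snake_vertices k n)}"
    by simp
  fix u v
  assume "{u, v} \<in> snake_edges k n"
  then obtain c d where cd: "{snake_position k u, snake_position k v} = {c * d, (c + 1) * d}"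
    using assms(1) snake_edge_positions [of k u v n] by auto
  have "coprime (2 * (c * d) + 1) (2 * ((c + 1) * d) + 1)"
    using coprime_consecutive_multiples_add_1 [of "2 * d" c] by (simp only: ac_simps)
  with cd show "coprime (2 * snake_position k u + 1) (2 * snake_position k v + 1)"
    by (auto simp: doubleton_eq_iff coprime_commute)
qed

end
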